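(* Let $k\ge1$ and integers $0\le w<w'\le k$. Let $\mathcal{V}_w^k$ (resp. $\mathcal{V}_{w'}^k$) be the set of vectors in $\{0,1\}^k$ with exactly $w$ (resp. $w'$) ones, and let $L^k_{w,w'}=\prod_{i=0}^{w'-w-1}\frac{w'-i}{k-w-i}$. Let $\tilde{G}$ be the bipartite graph whose left vertex class is $\mathcal{V}_w^k$ and whose right vertex class is the disjoint union of $\lceil L^k_{w,w'}\rceil$ copies $\mathcal{V}^k_{w',1},\ldots,\mathcal{V}^k_{w',\lceil L^k_{w,w'}\rceil}$ of $\mathcal{V}_{w'}^k$, where $v\in\mathcal{V}_w^k$ is adjacent to the copy of $v'\in\mathcal{V}_{w'}^k$ in $\mathcal{V}^k_{w',l}$ (for each $l$) if and only if the support of $v$ is a subset of the support of $v'$. Then $\tilde{G}$ has a perfect matching with respect to $\mathcal{V}_w^k$.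
   Context: A perfect matching with respect to $\mathcal{V}_w^k$ is a set of $|\mathcal{V}_w^k|$ edges, no two of which share a vertex. The support of a vector is the set of indices of its nonzero entries. *)

theory Defs
  imports Main Complex_Main
begin

text \<open>Vectors in {0,1}^k are represented as lists of naturals of length k
with entries in {0,1}. The support is the set of indices of nonzero entries.\<close>

definition supp :: "nat list \<Rightarrow> nat set" where
  "supp v = {i. i < length v \<and> v ! i \<noteq> 0}"

definition weight_vecs :: "nat \<Rightarrow> nat \<Rightarrow> nat list set" where
  "weight_vecs k w = {v. length v = k \<and> set v \<subseteq> {0, 1} \<and> card (supp v) = w}"

definition L_const :: "nat \<Rightarrow> nat \<Rightarrow> nat \<Rightarrow> real" where
  "L_const k w w' = (\<Prod>i<w' - w. (real w' - real i) / (real k - real w - real i))"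

text \<open>The bipartite graph G~: left class weight_vecs k w, right class the disjoint
union of copies l = 1..ceil(L) of weight_vecs k w'; a right vertex is a pair (v', l).\<close>

definition tG_right :: "nat \<Rightarrow> nat \<Rightarrow> nat \<Rightarrow> (nat list \<times> nat) set" where
  "tG_right k w w' = weight_vecs k w' \<times> {1 .. nat \<lceil>L_const k w w'\<rceil>}"

definition tG_edges :: "nat \<Rightarrow> nat \<Rightarrow> nat \<Rightarrow> (nat list \<times> (nat list \<times> nat)) set" where
  "tG_edges k w w' = {(v, r). v \<in> weight_vecs k w \<and> r \<in> tG_right k w w' \<and> supp v \<subseteq> supp (fst r)}"

text \<open>A perfect matching with respect to the left class A: a set of card A edges,
no two of which share a vertex (in a bipartite graph with edges (left,right), two
distinct edges share a vertex iff they agree on the left or on the right end).\<close>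

definition perfect_matching_wrt :: "('a \<times> 'b) set \<Rightarrow> 'a set \<Rightarrow> ('a \<times> 'b) set \<Rightarrow> bool" where
  "perfect_matching_wrt E A M \<longleftrightarrow>
     M \<subseteq> E \<and> finite M \<and> card M = card A \<and>
     (\<forall>e\<in>M. \<forall>e'\<in>M. e \<noteq> e' \<longrightarrow> fst e \<noteq> fst e' \<and> snd e \<noteq> snd e')"

end

theory Submission
  imports Defs
begin

text \<open>Every left vertex of the graph has degree \<open>C(k-w, w'-w) * \<lceil>L\<rceil>\<close>, which is at least
\<open>C(w', w)\<close> because \<open>C(w', w) = L * C(k-w, w'-w)\<close>; every right vertex has degree \<open>C(w', w)\<close>,
its neighbours corresponding to the \<open>w\<close>-subsets of a \<open>w'\<close>-set. Double counting the edges
leaving a set \<open>J\<close> of left vertices therefore shows that \<open>J\<close> has at least \<open>|J|\<close> neighbours,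
and Hall's marriage theorem yields the matching.\<close>

lemma Hall_condition_remove_one:
  fixes A :: "'a \<Rightarrow> 'b set"
  assumes "finite I" "\<forall>i\<in>I. finite (A i)" "i0 \<in> I"
    and surplus: "\<forall>J. J \<subseteq> I \<and> J \<noteq> {} \<and> J \<noteq> I \<longrightarrow> card J < card (\<Union>(A ` J))"
    and J: "J \<subseteq> I - {i0}"
  shows "card J \<le> card (\<Union>i\<in>J. A i - {x})"
proof (cases "J = {}")
  case False
  have "finite (\<Union>(A ` J))"
    using assms(1,2) J by (meson Diff_subset finite_UN_I finite_subset subsetD)
  moreover have "card J < card (\<Union>(A ` J))"
    using surplus J False assms(3) by blast
  moreover have "(\<Union>i\<in>J. A i - {x}) = \<Union>(A ` J) - {x}"
    by blast
  ultimately show ?thesis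
    by (auto simp: card_Diff_singleton_if)
qed simp

lemma Hall_condition_remove_critical:
  fixes A :: "'a \<Rightarrow> 'b set"
  assumes "finite I" "\<forall>i\<in>I. finite (A i)"
    and Hall: "\<forall>J\<subseteq>I. card J \<le> card (\<Union>(A ` J))"
    and J: "J \<subseteq> I" "card (\<Union>(A ` J)) \<le> card J"
    and K: "K \<subseteq> I - J"
  shows "card K \<le> card (\<Union>i\<in>K. A i - \<Union>(A ` J))"
proof -
  have KJ: "K \<union> J \<subseteq> I" "K \<inter> J = {}"
    using J(1) K by blast+
  then have fin: "finite K" "finite J" "finite (\<Union>(A ` (K \<union> J)))"
    using assms(1,2) by (meson finite_UN_I finite_subset le_sup_iff subsetD)+
  have "card K + card J = card (K \<union> J)"
    using fin KJ by (simp add: card_Un_disjoint)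
  also have "\<dots> \<le> card (\<Union>(A ` (K \<union> J)))"
    using Hall KJ(1) by blast
  also have "\<dots> = card (\<Union>i\<in>K. A i - \<Union>(A ` J)) + card (\<Union>(A ` J))"
  proof -
    have "\<Union>(A ` J) \<subseteq> \<Union>(A ` (K \<union> J))"
      by blast
    moreover have "(\<Union>i\<in>K. A i - \<Union>(A ` J)) = \<Union>(A ` (K \<union> J)) - \<Union>(A ` J)"
      by blast
    ultimately show ?thesis
      using fin(3) by (metis card_Diff_subset card_mono finite_subset le_add_diff_inverse2)
  qed
  finally show ?thesis
    using J(2) by linarith
qed

theorem Hall_marriage:
  fixes A :: "'a \<Rightarrow> 'b set"
  assumes "finite I" "\<forall>i\<in>I. finite (A i)" "\<forall>J\<subseteq>I. card J \<le> card (\<Union>(A ` J))"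
  shows "\<exists>f. inj_on f I \<and> (\<forall>i\<in>I. f i \<in> A i)"
  using assms
proof (induction "card I" arbitrary: I A rule: less_induct)
  case less
  note fin = less.prems(1,2) and Hall = less.prems(3)
  consider (empty) "I = {}"
    | (surplus) "I \<noteq> {}" "\<forall>J. J \<subseteq> I \<and> J \<noteq> {} \<and> J \<noteq> I \<longrightarrow> card J < card (\<Union>(A ` J))"
    | (critical) J where "J \<subseteq> I" "J \<noteq> {}" "J \<noteq> I" "card (\<Union>(A ` J)) \<le> card J"
    by (meson not_less)
  then show ?case
  proof cases
    case empty
    then show ?thesis by simp
  next
    case surplus
    then obtain i0 where i0: "i0 \<in> I"
      by blast
    have "card {i0} \<le> card (A i0)"
      using Hall[rule_format, of "{i0}"] i0 by simp
    then obtain x where x: "x \<in> A i0"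
      by (auto simp: Suc_le_eq card_gt_0_iff)
    have "card (I - {i0}) < card I"
      using fin(1) i0 by (rule card_Diff1_less)
    then obtain f where f: "inj_on f (I - {i0})" "\<forall>i\<in>I - {i0}. f i \<in> A i - {x}"
      using less.hyps[of "I - {i0}" "\<lambda>i. A i - {x}"] fin
        Hall_condition_remove_one[OF fin i0 surplus(2)] by blast
    have "inj_on (f(i0 := x)) (insert i0 (I - {i0}))"
      using f by (auto simp: inj_on_def)
    then have "inj_on (f(i0 := x)) I"
      using i0 by (simp add: insert_absorb)
    moreover have "\<forall>i\<in>I. (f(i0 := x)) i \<in> A i"
      using f(2) x by auto
    ultimately show ?thesis
      by blast
  next
    case critical
    let ?U = "\<Union>(A ` J)"
    have "card J < card I"
      using critical(1,3) fin(1) by (simp add: psubset_card_mono psubsetI)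
    moreover have "finite J" "\<forall>i\<in>J. finite (A i)" "\<forall>K\<subseteq>J. card K \<le> card (\<Union>(A ` K))"
      using critical(1) fin Hall by (blast intro: finite_subset)+
    ultimately obtain f1 where f1: "inj_on f1 J" "\<forall>i\<in>J. f1 i \<in> A i"
      using less.hyps[of J A] by blast
    have "card (I - J) < card I"
      using critical(1,2) fin(1) by (intro psubset_card_mono) auto
    then obtain f2 where f2: "inj_on f2 (I - J)" "\<forall>i\<in>I - J. f2 i \<in> A i - ?U"
      using less.hyps[of "I - J" "\<lambda>i. A i - ?U"] fin
        Hall_condition_remove_critical[OF fin Hall critical(1,4)] by blast
    define f where "f i = (if i \<in> J then f1 i else f2 i)" for i
    have "inj_on f J" "inj_on f (I - J)"
      using f1(1) f2(1) by (auto simp: f_def inj_on_def)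
    moreover have "f ` J \<subseteq> ?U" "f ` (I - J) \<inter> ?U = {}"
      using f1(2) f2(2) by (auto simp: f_def)
    ultimately have "inj_on f (J \<union> (I - J))"
      unfolding inj_on_Un by blast
    moreover have "J \<union> (I - J) = I"
      using critical(1) by blast
    moreover have "\<forall>i\<in>I. f i \<in> A i"
      using f1(2) f2(2) by (simp add: f_def)
    ultimately show ?thesis
      by metis
  qed
qed

lemma Hall_condition_of_degree_bounds:
  fixes A :: "'a \<Rightarrow> 'b set"
  assumes "finite J" "\<forall>i\<in>J. finite (A i)" "0 < b"
    and left: "\<forall>i\<in>J. b \<le> card (A i)"
    and right: "\<forall>r. card {i \<in> J. r \<in> A i} \<le> b"
  shows "card J \<le> card (\<Union>(A ` J))"
proof -
  let ?N = "\<Union>(A ` J)"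
  have finN: "finite ?N"
    using assms(1,2) by blast
  have "card J * b \<le> (\<Sum>i\<in>J. card (A i))"
    using left sum_mono[of J "\<lambda>_. b"] by simp
  also have "\<dots> = (\<Sum>i\<in>J. card {r \<in> ?N. r \<in> A i})"
    by (intro sum.cong) (auto intro: arg_cong[where f = card])
  also have "\<dots> = (\<Sum>r\<in>?N. card {i \<in> J. r \<in> A i})"
    using assms(1) finN by (rule sum_multicount_gen) simp
  also have "\<dots> \<le> card ?N * b"
    using right sum_mono[of ?N "\<lambda>r. card {i \<in> J. r \<in> A i}" "\<lambda>_. b"] by simp
  finally show ?thesis
    using assms(3) by simp
qed

lemma perfect_matching_wrt_graph_of_inj:
  assumes "finite I" "inj_on f I" "\<forall>i\<in>I. (i, f i) \<in> E"
  shows "perfect_matching_wrt E I ((\<lambda>i. (i, f i)) ` I)"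
  using assms unfolding perfect_matching_wrt_def
  by (auto simp: card_image inj_on_def dest: inj_onD)

lemma ex_perfect_matching_wrt_if_degree_bounds:
  fixes E :: "('a \<times> 'b) set"
  assumes "finite I" "0 < b" "\<forall>i\<in>I. finite (E `` {i})"
    and left: "\<forall>i\<in>I. b \<le> card (E `` {i})"
    and right: "\<forall>r. card {i \<in> I. (i, r) \<in> E} \<le> b"
  shows "\<exists>M. perfect_matching_wrt E I M"
proof -
  have "card J \<le> card (\<Union>i\<in>J. E `` {i})" if "J \<subseteq> I" for J
  proof (rule Hall_condition_of_degree_bounds)
    show "\<forall>r. card {i \<in> J. r \<in> E `` {i}} \<le> b"
    proof
      fix r
      have "card {i \<in> J. r \<in> E `` {i}} \<le> card {i \<in> I. (i, r) \<in> E}"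
        using \<open>J \<subseteq> I\<close> assms(1) by (intro card_mono) auto
      then show "card {i \<in> J. r \<in> E `` {i}} \<le> b"
        using right order_trans by blast
    qed
  qed (use that assms in \<open>auto intro: finite_subset\<close>)
  then obtain f where "inj_on f I" "\<forall>i\<in>I. f i \<in> E `` {i}"
    using Hall_marriage[of I "\<lambda>i. E `` {i}"] assms(1,3) by blast
  then show ?thesis
    using perfect_matching_wrt_graph_of_inj[OF assms(1)] by blast
qed

lemma card_supersets_of_card:
  assumes "finite X" "S \<subseteq> X" "card S \<le> n"
  shows "card {T. T \<subseteq> X \<and> card T = n \<and> S \<subseteq> T} = (card X - card S) choose (n - card S)"
proof -
  have fin: "finite S" "\<And>T. T \<subseteq> X \<Longrightarrow> finite T"
    using assms(1,2) finite_subset by blast+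
  have "bij_betw (\<lambda>T. T - S) {T. T \<subseteq> X \<and> card T = n \<and> S \<subseteq> T}
                              {U. U \<subseteq> X - S \<and> card U = n - card S}"
  proof (rule bij_betw_byWitness[where f' = "\<lambda>U. U \<union> S"])
    show "(\<lambda>U. U \<union> S) ` {U. U \<subseteq> X - S \<and> card U = n - card S}
      \<subseteq> {T. T \<subseteq> X \<and> card T = n \<and> S \<subseteq> T}"
    proof (rule image_subsetI)
      fix U assume U: "U \<in> {U. U \<subseteq> X - S \<and> card U = n - card S}"
      then have "card (U \<union> S) = card U + card S"
        using fin by (intro card_Un_disjoint) auto
      then show "U \<union> S \<in> {T. T \<subseteq> X \<and> card T = n \<and> S \<subseteq> T}"
        using U assms(2,3) by auto
    qed
    show "(\<lambda>T. T - S) ` {T. T \<subseteq> X \<and> card T = n \<and> S \<subseteq> T}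
      \<subseteq> {U. U \<subseteq> X - S \<and> card U = n - card S}"
    proof (rule image_subsetI)
      fix T assume "T \<in> {T. T \<subseteq> X \<and> card T = n \<and> S \<subseteq> T}"
      then show "T - S \<in> {U. U \<subseteq> X - S \<and> card U = n - card S}"
        using fin(1) by (auto simp: card_Diff_subset)
    qed
  qed blast+
  then have "card {T. T \<subseteq> X \<and> card T = n \<and> S \<subseteq> T}
      = card {U. U \<subseteq> X - S \<and> card U = n - card S}"
    by (rule bij_betw_same_card)
  also have "\<dots> = (card X - card S) choose (n - card S)"
    using assms fin by (simp add: n_subsets card_Diff_subset)
  finally show ?thesis .
qed

definition indicator_list :: "nat \<Rightarrow> nat set \<Rightarrow> nat list" where
  "indicator_list k T = map (\<lambda>i. if i \<in> T then 1 else 0) [0..<k]"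

lemma bij_betw_supp_weight_vecs:
  "bij_betw supp (weight_vecs k w) {T. T \<subseteq> {..<k} \<and> card T = w}"
proof (rule bij_betw_byWitness[where f' = "indicator_list k"])
  show "\<forall>v\<in>weight_vecs k w. indicator_list k (supp v) = v"
  proof
    fix v assume v: "v \<in> weight_vecs k w"
    show "indicator_list k (supp v) = v"
    proof (rule nth_equalityI)
      show "length (indicator_list k (supp v)) = length v"
        using v by (simp add: indicator_list_def weight_vecs_def)
      fix i assume "i < length (indicator_list k (supp v))"
      then have i: "i < length v" "v ! i \<in> {0, 1}"
        using v nth_mem by (fastforce simp: indicator_list_def weight_vecs_def)+
      then have "indicator_list k (supp v) ! i = (if v ! i \<noteq> 0 then 1 else 0)"
        using v by (simp add: indicator_list_def supp_def weight_vecs_def)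
      then show "indicator_list k (supp v) ! i = v ! i"
        using i(2) by auto
    qed
  qed
  have supp_indicator_list: "supp (indicator_list k T) = T" if "T \<subseteq> {..<k}" for T
    using that by (auto simp: indicator_list_def supp_def split: if_splits)
  then show "\<forall>T\<in>{T. T \<subseteq> {..<k} \<and> card T = w}. supp (indicator_list k T) = T"
    by blast
  show "supp ` weight_vecs k w \<subseteq> {T. T \<subseteq> {..<k} \<and> card T = w}"
    by (auto simp: weight_vecs_def supp_def)
  show "indicator_list k ` {T. T \<subseteq> {..<k} \<and> card T = w} \<subseteq> weight_vecs k w"
    using supp_indicator_list by (auto simp: weight_vecs_def indicator_list_def)
qed

lemma finite_weight_vecs: "finite (weight_vecs k w)"
proof -
  have "finite {T. T \<subseteq> {..<k} \<and> card T = w}"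
    by (rule finite_subset[of _ "Pow {..<k}"]) auto
  then show ?thesis
    using bij_betw_finite[OF bij_betw_supp_weight_vecs] by blast
qed

lemma card_weight_vecs_supp:
  "card {v \<in> weight_vecs k w. P (supp v)} = card {T. T \<subseteq> {..<k} \<and> card T = w \<and> P T}"
proof (rule bij_betw_same_card, rule bij_betw_subset[OF bij_betw_supp_weight_vecs[of k w]])
  have surj: "supp ` weight_vecs k w = {T. T \<subseteq> {..<k} \<and> card T = w}"
    using bij_betw_supp_weight_vecs by (rule bij_betw_imp_surj_on)
  show "supp ` {v \<in> weight_vecs k w. P (supp v)} = {T. T \<subseteq> {..<k} \<and> card T = w \<and> P T}"
  proof
    show "supp ` {v \<in> weight_vecs k w. P (supp v)} \<subseteq> {T. T \<subseteq> {..<k} \<and> card T = w \<and> P T}"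
      using surj by auto
    show "{T. T \<subseteq> {..<k} \<and> card T = w \<and> P T} \<subseteq> supp ` {v \<in> weight_vecs k w. P (supp v)}"
    proof
      fix T assume T: "T \<in> {T. T \<subseteq> {..<k} \<and> card T = w \<and> P T}"
      then obtain v where "v \<in> weight_vecs k w" "T = supp v"
        using surj by (metis (mono_tags, lifting) imageE mem_Collect_eq)
      then show "T \<in> supp ` {v \<in> weight_vecs k w. P (supp v)}"
        using T by auto
    qed
  qed
qed simp

lemma binomial_eq_L_const_mult:
  assumes "w \<le> w'" "w' \<le> k"
  shows "real (w' choose w) = L_const k w w' * real ((k - w) choose (w' - w))"
proof -
  define d where "d = w' - w"
  have num: "real (w' choose d) = (\<Prod>i<d. real w' - real i) / fact d"
    by (simp add: binomial_gbinomial gbinomial_prod_rev atLeast0LessThan)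
  have den: "real ((k - w) choose d) = (\<Prod>i<d. real k - real w - real i) / fact d"
    using assms by (simp add: binomial_gbinomial gbinomial_prod_rev atLeast0LessThan of_nat_diff)
  have "L_const k w w' = (\<Prod>i<d. real w' - real i) / (\<Prod>i<d. real k - real w - real i)"
    unfolding L_const_def d_def by (simp add: prod_dividef)
  also have "\<dots> = real (w' choose d) / real ((k - w) choose d)"
    unfolding num den by simp
  finally have "L_const k w w' = real (w' choose d) / real ((k - w) choose d)" .
  moreover have "real ((k - w) choose d) \<noteq> 0"
    using assms unfolding d_def by simp
  moreover have "w' choose d = w' choose w"
    using assms binomial_symmetric[of d w'] unfolding d_def by simp
  ultimately show ?thesis
    unfolding d_def by simp
qed

lemma binomial_le_ceiling_L_const_mult:
  assumes "w \<le> w'" "w' \<le> k"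
  shows "w' choose w \<le> ((k - w) choose (w' - w)) * nat \<lceil>L_const k w w'\<rceil>"
proof -
  have "real (w' choose w) \<le> real ((k - w) choose (w' - w)) * real (nat \<lceil>L_const k w w'\<rceil>)"
    unfolding binomial_eq_L_const_mult[OF assms] mult.commute[of "L_const k w w'"]
    by (intro mult_left_mono real_nat_ceiling_ge) simp
  then show ?thesis
    by (simp only: of_nat_mult[symmetric] of_nat_le_iff)
qed

lemma tG_edges_Image:
  assumes "v \<in> weight_vecs k w"
  shows "tG_edges k w w' `` {v}
    = {v' \<in> weight_vecs k w'. supp v \<subseteq> supp v'} \<times> {1 .. nat \<lceil>L_const k w w'\<rceil>}"
  using assms by (auto simp: tG_edges_def tG_right_def)

lemma card_tG_edges_Image:
  assumes "v \<in> weight_vecs k w" "w \<le> w'" "w' \<le> k"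
  shows "card (tG_edges k w w' `` {v}) = ((k - w) choose (w' - w)) * nat \<lceil>L_const k w w'\<rceil>"
proof -
  have v: "supp v \<subseteq> {..<k}" "card (supp v) = w"
    using bij_betwE[OF bij_betw_supp_weight_vecs] assms(1) by blast+
  have "card {v' \<in> weight_vecs k w'. supp v \<subseteq> supp v'}
      = card {T. T \<subseteq> {..<k} \<and> card T = w' \<and> supp v \<subseteq> T}"
    by (rule card_weight_vecs_supp)
  also have "\<dots> = (k - w) choose (w' - w)"
    using card_supersets_of_card[of "{..<k}" "supp v" w'] v assms(2) by simp
  finally show ?thesis
    unfolding tG_edges_Image[OF assms(1)] by (simp add: card_cartesian_product)
qed

lemma card_tG_left_neighbours_le:
  "card {v \<in> weight_vecs k w. (v, r) \<in> tG_edges k w w'} \<le> w' choose w"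
proof (cases "fst r \<in> weight_vecs k w'")
  case True
  then have r: "supp (fst r) \<subseteq> {..<k}" "card (supp (fst r)) = w'"
    using bij_betwE[OF bij_betw_supp_weight_vecs] by blast+
  have "card {v \<in> weight_vecs k w. (v, r) \<in> tG_edges k w w'}
      \<le> card {v \<in> weight_vecs k w. supp v \<subseteq> supp (fst r)}"
    by (intro card_mono) (auto simp: finite_weight_vecs tG_edges_def)
  also have "\<dots> = card {T. T \<subseteq> {..<k} \<and> card T = w \<and> T \<subseteq> supp (fst r)}"
    by (rule card_weight_vecs_supp)
  also have "{T. T \<subseteq> {..<k} \<and> card T = w \<and> T \<subseteq> supp (fst r)}
      = {T. T \<subseteq> supp (fst r) \<and> card T = w}"
    using r(1) by blast
  also have "card \<dots> = w' choose w"
    using r by (simp add: n_subsets finite_subset)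
  finally show ?thesis .
next
  case False
  then have "{v \<in> weight_vecs k w. (v, r) \<in> tG_edges k w w'} = {}"
    by (auto simp: tG_edges_def tG_right_def)
  then show ?thesis
    by (metis card.empty le0)
qed

theorem lemma10:
  fixes k w w' :: nat
  assumes "k \<ge> 1" and "w < w'" and "w' \<le> k"
  shows "\<exists>M. perfect_matching_wrt (tG_edges k w w') (weight_vecs k w) M"
proof (rule ex_perfect_matching_wrt_if_degree_bounds[where b = "w' choose w"])
  show "\<forall>v\<in>weight_vecs k w. w' choose w \<le> card (tG_edges k w w' `` {v})"
    using assms binomial_le_ceiling_L_const_mult card_tG_edges_Image by simp
  show "\<forall>r. card {v \<in> weight_vecs k w. (v, r) \<in> tG_edges k w w'} \<le> w' choose w"
    using card_tG_left_neighbours_le by simp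
qed (use assms in \<open>simp_all add: finite_weight_vecs tG_edges_Image\<close>)

end
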